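(* For every real $\theta$, \[\int_{\Gamma\backslash\mathcal{V}(\mathcal{T})}E\Big(v,\frac12+i\frac{\theta}{\log q}\Big)\,d\mu(v)=0.\]
   Context: $q$ odd prime power, $A=\mathbb{F}_q[T]$, $k_\infty=\mathbb{F}_q((T^{-1}))$, $|T|=q$, $\Gamma=\mathrm{PGL}_2(A)$, $\Gamma_\infty$ its upper-triangular subgroup. $\Gamma\backslash\mathcal{V}(\mathcal{T})=\{v_0,v_1,\dots\}$, the vertices of the quotient of the Bruhat–Tits tree of $\mathrm{PGL}_2(k_\infty)$, $v_n$ the orbit of the class of $T^n\mathcal{O}_\infty\oplus\mathcal{O}_\infty$; $\mu$ is the probability measure with $\mu(v_0)=\frac{q-1}{2q}$, $\mu(v_n)=\frac{q^2-1}{2q^{n+1}}$ for $n\ge1$. For $g=\begin{pmatrix}a&b\\c&d\end{pmatrix}\in\mathrm{GL}_2(k_\infty)$ let $\psi(g)=|\det g|\max\{|c|,|d|\}^{-2}$ and $E(g,s)=\sum_{\gamma\in\Gamma_\infty\backslash\Gamma}\psi(\gamma g)^s$, a rational function of $q^{-s}$, holomorphic on $\mathrm{Re}(s)\ge1/2$ except for simple poles at $s=1+k\pi i/\log q$, $k\in\mathbb{Z}$; $E(v_n,s):=E(\mathrm{diag}(T^n,1),s)$. *)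

theory Defs
  imports "HOL-Analysis.Analysis" "HOL-Computational_Algebra.Polynomial_Factorial"
begin

text \<open>A = F_q[T] is modelled by 'a poly with 'a a finite field, q = CARD('a).
  The absolute value on A (restriction of the one on k_infinity): |p| = q^deg p, |0| = 0.\<close>
definition absA :: "'a::{field,finite} poly \<Rightarrow> real" where
  "absA p = (if p = 0 then 0 else real CARD('a) ^ degree p)"

text \<open>psi(gamma * diag(T^n,1)) for gamma in PGL_2(A) with bottom row (c,d):
  gamma * diag(T^n,1) has bottom row (c T^n, d) and |det| = q^n (det gamma in F_q^*).\<close>
definition psi_n :: "nat \<Rightarrow> 'a::{field,finite} poly \<times> 'a poly \<Rightarrow> real" where
  "psi_n n cd = (case cd of (c, d) \<Rightarrow>
      real CARD('a) ^ n / (max (absA c * real CARD('a) ^ n) (absA d))\<^sup>2)"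

text \<open>A system of representatives of Gamma_infinity \ Gamma: the coset Gamma_infinity gamma
  is determined by the bottom row (c,d) of gamma, a coprime pair in A^2, up to F_q^*;
  we normalise the first nonzero entry to be monic.\<close>
definition coset_reps :: "('a::{field,finite} poly \<times> 'a poly) set" where
  "coset_reps = {(c, d). coprime c d \<and> (if c = 0 then lead_coeff d = 1 else lead_coeff c = 1)}"

text \<open>The measure mu on the vertices v_0, v_1, ... of the quotient graph.\<close>
definition mu_q :: "real \<Rightarrow> nat \<Rightarrow> real" where
  "mu_q q n = (if n = 0 then (q - 1) / (2 * q) else (q\<^sup>2 - 1) / (2 * q ^ (n + 1)))"

definition eis_poles :: "real \<Rightarrow> complex set" where
  "eis_poles q = {1 + of_int k * of_real pi * \<i> / of_real (ln q) | k. True}"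

end

theory Submission
  imports Defs "HOL-Complex_Analysis.Complex_Analysis"
begin

text \<open>
  For real s > 1 every term of the series is a power of z = q^-s. Each nonzero pair (x, y) in A^2,
  taken up to scalars, factors uniquely as g (c, d) with g monic and (c, d) a coset representative,
  so the sum over all such pairs is E(v_n, s) times the sum of z^(2 deg g) over monic g, which is
  1 / (1 - q z^2); counting polynomials by degree evaluates the same sum directly. Hence
  E(v_n, s) = z^-n + q^(n+1) z^n (1 - z^2) / (1 - q^2 z^2), and by analytic continuation this
  persists on the line Re s = 1/2, where |z| = q^(-1/2). There the mu-weighted sum over n splits
  into two convergent geometric series, in z and in 1/(q z), whose total is a rational function
  of z that vanishes identically.
\<close>

lemma has_sum_geometric:
  fixes z :: "'a::{real_normed_field,banach}"
  assumes "norm z < 1"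
  shows "((\<lambda>n. z ^ n) has_sum 1 / (1 - z)) UNIV"
  using assms by (intro norm_summable_imp_has_sum geometric_sums) (simp_all add: norm_power)

lemma nonneg_has_sum_SigmaI:
  fixes f :: "'a \<times> 'b \<Rightarrow> real"
  assumes "\<And>x. x \<in> A \<Longrightarrow> ((\<lambda>y. f (x, y)) has_sum g x) (B x)" "(g has_sum S) A"
    and "\<And>x y. x \<in> A \<Longrightarrow> y \<in> B x \<Longrightarrow> 0 \<le> f (x, y)"
  shows "(f has_sum S) (Sigma A B)"
  using assms
  by (intro has_sum_SigmaI[where g = g] summable_on_SigmaI[where g = g])
    (auto dest: has_sum_imp_summable)

lemma has_sum_comp_by_fibers:
  fixes key :: "'b \<Rightarrow> 'c" and \<phi> :: "'c \<Rightarrow> real"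
  assumes fin: "\<And>j. finite {x \<in> A. key x = j}" and nonneg: "\<And>j. 0 \<le> \<phi> j"
    and fibers: "((\<lambda>j. \<phi> j * real (card {x \<in> A. key x = j})) has_sum S) UNIV"
  shows "((\<lambda>x. \<phi> (key x)) has_sum S) A"
proof -
  let ?B = "\<lambda>j. {x \<in> A. key x = j}"
  have "((\<lambda>(j, x). \<phi> j) has_sum S) (Sigma UNIV ?B)"
  proof (rule nonneg_has_sum_SigmaI[OF _ fibers])
    show "((\<lambda>x. case (j, x) of (j, x) \<Rightarrow> \<phi> j) has_sum \<phi> j * real (card (?B j))) (?B j)" for j
      using fin[of j] by (intro has_sum_finiteI) (simp_all add: sum_constant mult.commute)
  qed (simp add: nonneg)
  then have "((\<lambda>p. \<phi> (key (snd p))) has_sum S) (Sigma UNIV ?B)"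
    by (rule has_sum_cong[THEN iffD1, rotated]) auto
  moreover have "bij_betw snd (Sigma UNIV ?B) A"
    by (auto simp: bij_betw_def inj_on_def image_iff)
  ultimately show ?thesis
    using has_sum_reindex_bij_betw[of snd "Sigma UNIV ?B" A "\<lambda>x. \<phi> (key x)"] by simp
qed

section \<open>Counting polynomials over a finite field\<close>

lemma Collect_eq_pCons_image:
  assumes "\<And>a p. P (pCons a p) \<longleftrightarrow> Q p"
  shows "{p. P p} = (\<lambda>(a, p). pCons a p) ` (UNIV \<times> {p. Q p})"
proof (intro equalityI subsetI)
  fix x assume "x \<in> {p. P p}"
  then show "x \<in> (\<lambda>(a, p). pCons a p) ` (UNIV \<times> {p. Q p})"
    using assms by (cases x) (auto simp: image_iff)
qed (use assms in auto)

lemma card_pCons_image: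
  "card ((\<lambda>(a, p). pCons a p) ` (UNIV \<times> S)) = CARD('a::zero) * card (S :: 'a poly set)"
proof -
  have "inj_on (\<lambda>(a, p). pCons a p) (UNIV \<times> S)"
    by (auto intro!: inj_onI)
  then show ?thesis by (simp add: card_image card_cartesian_product)
qed

lemma card_degree_le:
  "card {p :: 'a::{zero,finite} poly. degree p \<le> m} = CARD('a) ^ Suc m"
proof (induction m)
  case 0
  have "{p :: 'a poly. degree p \<le> 0} = range (\<lambda>a. [:a:])"
    by (auto elim!: degree_eq_zeroE)
  then show ?case by (simp add: card_image inj_on_def)
next
  case (Suc m)
  have "{p :: 'a poly. degree p \<le> Suc m} = (\<lambda>(a, p). pCons a p) ` (UNIV \<times> {p. degree p \<le> m})"
    by (rule Collect_eq_pCons_image) (simp add: degree_pCons_eq_if)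
  then show ?case by (simp add: card_pCons_image Suc)
qed

lemma finite_degree_le: "finite {p :: 'a::{zero,finite} poly. degree p \<le> m}"
  using card_degree_le[of m, where 'a='a] by (intro card_ge_0_finite) simp

lemma card_degree_eq_Suc:
  "real (card {p :: 'a::{zero,finite} poly. degree p = Suc m})
     = (real CARD('a) - 1) * real CARD('a) ^ Suc m"
proof -
  have "{p :: 'a poly. degree p = Suc m} = {p. degree p \<le> Suc m} - {p. degree p \<le> m}"
    by auto
  then have "card {p :: 'a poly. degree p = Suc m} = CARD('a) ^ Suc (Suc m) - CARD('a) ^ Suc m"
    by (simp add: card_Diff_subset finite_degree_le card_degree_le subset_iff)
  moreover have "CARD('a) ^ Suc m \<le> CARD('a) ^ Suc (Suc m)"
    by (simp add: power_increasing)
  ultimately show ?thesis by (simp add: of_nat_diff algebra_simps)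
qed

lemma card_monic_degree:
  "card {p :: 'a::{zero_neq_one,finite} poly. degree p = k \<and> lead_coeff p = 1} = CARD('a) ^ k"
proof (induction k)
  case 0
  have "{p :: 'a poly. degree p = 0 \<and> lead_coeff p = 1} = {[:1:]}"
    by (auto elim!: degree_eq_zeroE)
  then show ?case by simp
next
  case (Suc k)
  have "{p :: 'a poly. degree p = Suc k \<and> lead_coeff p = 1}
      = (\<lambda>(a, p). pCons a p) ` (UNIV \<times> {p. degree p = k \<and> lead_coeff p = 1})"
    by (rule Collect_eq_pCons_image) (simp add: degree_pCons_eq_if)
  then show ?case by (simp add: card_pCons_image Suc)
qed

lemma finite_monic_degree:
  "finite {p :: 'a::{zero_neq_one,finite} poly. degree p = k \<and> lead_coeff p = 1}"
  using card_monic_degree[of k, where 'a='a] by (intro card_ge_0_finite) simp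

lemma has_sum_monic_degree_power:
  fixes b :: real
  assumes "0 \<le> b" "real CARD('a) * b < 1"
  shows "((\<lambda>g :: 'a::{zero_neq_one,finite} poly. b ^ degree g)
           has_sum 1 / (1 - real CARD('a) * b)) {g. lead_coeff g = 1}"
proof (rule has_sum_comp_by_fibers[where key = degree and \<phi> = "\<lambda>j. b ^ j"])
  have fiber: "{x \<in> {g :: 'a poly. lead_coeff g = 1}. degree x = j}
      = {p. degree p = j \<and> lead_coeff p = 1}" for j
    by auto
  show "finite {x \<in> {g :: 'a poly. lead_coeff g = 1}. degree x = j}" for j
    unfolding fiber by (rule finite_monic_degree)
  show "((\<lambda>j. b ^ j * real (card {x \<in> {g :: 'a poly. lead_coeff g = 1}. degree x = j}))
      has_sum 1 / (1 - real CARD('a) * b)) UNIV"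
    unfolding fiber card_monic_degree using has_sum_geometric[of "real CARD('a) * b"] assms
    by (simp add: power_mult_distrib mult_ac)
qed (use assms in simp)

lemma has_sum_max_degree_power:
  fixes b :: real
  defines "Q \<equiv> real CARD('a::{zero,finite})"
  assumes "0 \<le> b" "Q * b < 1"
  shows "((\<lambda>d :: 'a poly. b ^ max m (degree d))
           has_sum Q ^ Suc m * b ^ m * (1 - b) / (1 - Q * b)) UNIV"
proof -
  define low where "low = {d :: 'a poly. degree d \<le> m}"
  define high where "high = {d :: 'a poly. m < degree d}"
  define tail where "tail = (Q - 1) * (Q * b) ^ Suc m / (1 - Q * b)"
  have "((\<lambda>d. b ^ max m (degree d)) has_sum Q ^ Suc m * b ^ m) low"
  proof (rule has_sum_finiteI)
    show "finite low" unfolding low_def by (rule finite_degree_le)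
    show "Q ^ Suc m * b ^ m = (\<Sum>d\<in>low. b ^ max m (degree d))"
      by (simp add: low_def max_absorb1 card_degree_le Q_def)
  qed
  moreover have "((\<lambda>d. b ^ max m (degree d)) has_sum tail) high"
  proof -
    let ?key = "\<lambda>d. degree d - Suc m"
    have fiber: "{x \<in> high. ?key x = j} = {p. degree p = Suc (m + j)}" for j
      by (auto simp: high_def)
    have "((\<lambda>d. b ^ (Suc m + ?key d)) has_sum tail) high"
    proof (rule has_sum_comp_by_fibers[where \<phi> = "\<lambda>j. b ^ (Suc m + j)"])
      show "finite {x \<in> high. ?key x = j}" for j
        unfolding fiber by (rule finite_subset[OF _ finite_degree_le]) auto
      have "((\<lambda>j. (Q - 1) * (Q * b) ^ Suc m * (Q * b) ^ j) has_sum tail) UNIV"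
        using has_sum_cmult_right[OF has_sum_geometric[of "Q * b"]] assms
        by (simp add: tail_def Q_def)
      then show "((\<lambda>j. b ^ (Suc m + j) * real (card {x \<in> high. ?key x = j})) has_sum tail) UNIV"
        unfolding fiber card_degree_eq_Suc Q_def[symmetric]
        by (simp add: power_add power_mult_distrib algebra_simps)
    qed (use assms in simp)
    then show ?thesis
      by (rule has_sum_cong[THEN iffD1, rotated]) (simp add: high_def max_def)
  qed
  ultimately have "((\<lambda>d. b ^ max m (degree d)) has_sum Q ^ Suc m * b ^ m + tail) (low \<union> high)"
    by (intro has_sum_Un_disjoint) (auto simp: low_def high_def)
  moreover have "low \<union> high = UNIV" by (auto simp: low_def high_def)
  moreover have "Q ^ Suc m * b ^ m + tail = Q ^ Suc m * b ^ m * (1 - b) / (1 - Q * b)"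
    using assms by (simp add: tail_def field_simps power_mult_distrib)
  ultimately show ?thesis by simp
qed

section \<open>Bottom rows up to scalars\<close>

lemma poly_bezout_divisor:
  fixes x y :: "'a::field poly"
  assumes "x \<noteq> 0 \<or> y \<noteq> 0"
  obtains h u v where "h \<noteq> 0" "h = u * x + v * y" "h dvd x" "h dvd y"
proof -
  let ?comb = "\<lambda>h. h \<noteq> 0 \<and> (\<exists>u v. h = u * x + v * y)"
  have "?comb x \<or> ?comb y"
    using assms by (metis add.right_neutral add_0 mult_1 mult_zero_left)
  then obtain h where "?comb h" and least: "\<And>h'. ?comb h' \<Longrightarrow> degree h \<le> degree h'"
    using ex_has_least_nat[of ?comb _ degree] by blast
  then obtain u v where h: "h \<noteq> 0" "h = u * x + v * y" by blast
  have dvd_comb: "h dvd a * x + b * y" for a b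
  proof (rule ccontr)
    let ?z = "a * x + b * y"
    assume "\<not> h dvd ?z"
    then have "?z mod h \<noteq> 0" by (simp add: dvd_eq_mod_eq_0)
    moreover have "?z mod h = (a - ?z div h * u) * x + (b - ?z div h * v) * y"
      by (simp add: minus_div_mult_eq_mod[symmetric] h(2) algebra_simps)
    ultimately have "degree h \<le> degree (?z mod h)" by (intro least) blast
    moreover have "degree (?z mod h) < degree h"
      using degree_mod_less[OF h(1), of ?z] \<open>?z mod h \<noteq> 0\<close> by blast
    ultimately show False by simp
  qed
  show thesis
    using that[OF h] dvd_comb[of 1 0] dvd_comb[of 0 1] by simp
qed

lemma coprime_poly_bezout:
  fixes c d :: "'a::field poly"
  assumes "coprime c d"
  obtains u v where "u * c + v * d = 1"
proof -
  have "c \<noteq> 0 \<or> d \<noteq> 0" using assms by auto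
  then obtain h u v where "h \<noteq> 0" "h = u * c + v * d" "h dvd c" "h dvd d"
    by (rule poly_bezout_divisor)
  moreover from this have "is_unit h" using assms coprime_common_divisor by blast
  then obtain w where "1 = h * w" by (rule dvdE)
  ultimately show thesis
    using that[of "w * u" "w * v"] by (simp add: algebra_simps)
qed

lemma monic_dvd_antisym:
  fixes g g' :: "'a::field poly"
  assumes "lead_coeff g = 1" "lead_coeff g' = 1" "g dvd g'" "g' dvd g"
  shows "g = g'"
proof -
  obtain k where k: "g' = g * k" using assms(3) by (auto elim: dvdE)
  have "g \<noteq> 0" "g' \<noteq> 0" using assms(1,2) by auto
  then have "degree g' \<le> degree g" "k \<noteq> 0"
    using assms(4) k by (auto intro: dvd_imp_degree_le)
  then have "degree k = 0" using k \<open>g \<noteq> 0\<close> by (simp add: degree_mult_eq)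
  moreover have "lead_coeff k = 1" using assms(1,2) k by (simp add: lead_coeff_mult)
  ultimately have "k = 1" by (auto elim: degree_eq_zeroE simp: one_pCons)
  then show ?thesis using k by simp
qed

text \<open>Representatives of the nonzero vectors of A^2 modulo scalars, normalized as in coset_reps.\<close>
definition normalized_pairs :: "('a::field poly \<times> 'a poly) set" where
  "normalized_pairs = {(x, y). if x = 0 then lead_coeff y = 1 else lead_coeff x = 1}"

lemma normalized_pairs_eq:
  "normalized_pairs = (\<lambda>d. (0, d)) ` {d. lead_coeff d = 1} \<union> {c. lead_coeff c = 1} \<times> UNIV"
  by (auto simp: normalized_pairs_def image_iff)

lemma coset_reps_subset_normalized_pairs: "coset_reps \<subseteq> normalized_pairs"
  by (auto simp: coset_reps_def normalized_pairs_def)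

lemma normalized_pairs_nonzero: "(x, y) \<in> normalized_pairs \<Longrightarrow> x \<noteq> 0 \<or> y \<noteq> 0"
  by (auto simp: normalized_pairs_def)

lemma normalized_pair_factor:
  fixes x y :: "'a::field poly"
  assumes "(x, y) \<in> normalized_pairs"
  obtains g c d where "lead_coeff g = 1" "coprime c d" "x = g * c" "y = g * d"
    "if c = 0 then lead_coeff d = 1 else lead_coeff c = 1"
proof -
  from normalized_pairs_nonzero[OF assms]
  obtain h u v where h: "h \<noteq> 0" "h = u * x + v * y" "h dvd x" "h dvd y"
    by (rule poly_bezout_divisor)
  define g where "g = smult (inverse (lead_coeff h)) h"
  have g: "lead_coeff g = 1" "g dvd x" "g dvd y"
    using h(1,3,4) by (simp_all add: g_def smult_dvd_iff)
  have g_comb: "g = smult (inverse (lead_coeff h)) u * x + smult (inverse (lead_coeff h)) v * y"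
    by (simp add: g_def h(2) smult_add_right)
  obtain c d where cd: "x = g * c" "y = g * d" using g(2,3) by (auto elim!: dvdE)
  have "coprime c d"
  proof (rule coprimeI)
    fix k assume "k dvd c" "k dvd d"
    then have "g * k dvd x" "g * k dvd y" using cd by (simp_all add: mult_dvd_mono)
    then have "g * k dvd g * 1"
      unfolding mult_1_right g_comb by (intro dvd_add dvd_mult)
    moreover have "g \<noteq> 0" using g(1) by auto
    ultimately show "is_unit k" by (simp add: dvd_mult_cancel_left)
  qed
  moreover have "if c = 0 then lead_coeff d = 1 else lead_coeff c = 1"
  proof (cases "c = 0")
    case True
    then have "lead_coeff y = 1" using assms cd by (simp add: normalized_pairs_def)
    then show ?thesis using True cd g(1) by (simp add: lead_coeff_mult)
  next
    case False
    then have "x \<noteq> 0" using cd g(1) by auto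
    then have "lead_coeff x = 1" using assms by (simp add: normalized_pairs_def)
    then show ?thesis using False cd g(1) by (simp add: lead_coeff_mult)
  qed
  ultimately show thesis using that g(1) cd by blast
qed

lemma coset_reps_factor_unique:
  fixes g g' c c' d d' :: "'a::{field,finite} poly"
  assumes "lead_coeff g = 1" "lead_coeff g' = 1" "(c, d) \<in> coset_reps" "(c', d') \<in> coset_reps"
    and "g * c = g' * c'" "g * d = g' * d'"
  shows "g = g' \<and> c = c' \<and> d = d'"
proof -
  have dvd: "h' dvd h" if "(a, b) \<in> coset_reps" "h * a = h' * a'" "h * b = h' * b'"
    for h h' a b a' b' :: "'a poly"
  proof -
    have "coprime a b" using that(1) by (simp add: coset_reps_def)
    then obtain u v where "u * a + v * b = 1" by (rule coprime_poly_bezout)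
    then have "h = h * (u * a + v * b)" by simp
    also have "\<dots> = u * (h * a) + v * (h * b)" by (simp add: algebra_simps)
    also have "\<dots> = h' * (u * a' + v * b')" using that(2,3) by (simp add: algebra_simps)
    finally show ?thesis by (rule dvdI)
  qed
  have "g dvd g'" using assms(4) assms(5,6)[symmetric] by (rule dvd)
  moreover have "g' dvd g" using assms(3,5,6) by (rule dvd)
  ultimately have "g = g'" by (rule monic_dvd_antisym[OF assms(1,2)])
  moreover have "g \<noteq> 0" using assms(1) by auto
  ultimately show ?thesis using assms(5,6) by simp
qed

lemma bij_betw_monic_times_coset_reps:
  "bij_betw (\<lambda>(g, c, d). (g * c, g * d))
     ({g :: 'a::{field,finite} poly. lead_coeff g = 1} \<times> coset_reps) normalized_pairs"
proof (rule bij_betw_imageI)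
  show "inj_on (\<lambda>(g, c, d). (g * c, g * d)) ({g :: 'a poly. lead_coeff g = 1} \<times> coset_reps)"
  proof (rule inj_onI, clarify)
    fix g c d g' c' d' :: "'a poly"
    assume "(c, d) \<in> coset_reps" "lead_coeff g = 1" "(c', d') \<in> coset_reps" "lead_coeff g' = 1"
      and "g * c = g' * c'" "g * d = g' * d'"
    then show "g = g' \<and> (c, d) = (c', d')" using coset_reps_factor_unique by blast
  qed
  show "(\<lambda>(g, c, d). (g * c, g * d)) ` ({g :: 'a poly. lead_coeff g = 1} \<times> coset_reps)
      = normalized_pairs"
  proof (intro equalityI subsetI)
    fix p assume "p \<in> (\<lambda>(g, c, d). (g * c, g * d)) ` ({g. lead_coeff g = 1} \<times> coset_reps)"
    then show "p \<in> normalized_pairs"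
      by (auto simp: normalized_pairs_def coset_reps_def lead_coeff_mult)
  next
    fix p :: "'a poly \<times> 'a poly" assume "p \<in> normalized_pairs"
    then obtain x y where p: "p = (x, y)" "(x, y) \<in> normalized_pairs" by (cases p) auto
    obtain g c d where "lead_coeff g = 1" "coprime c d" "x = g * c" "y = g * d"
        "if c = 0 then lead_coeff d = 1 else lead_coeff c = 1"
      using p(2) by (rule normalized_pair_factor)
    then show "p \<in> (\<lambda>(g, c, d). (g * c, g * d)) ` ({g. lead_coeff g = 1} \<times> coset_reps)"
      using p by (intro image_eqI[of _ _ "(g, c, d)"]) (simp_all add: coset_reps_def)
  qed
qed

section \<open>The Eisenstein series for real \<open>s > 1\<close>\<close>

lemma card_ge_2_field: "2 \<le> CARD('a::{field,finite})"
  using card_mono[of UNIV "{0, 1 :: 'a}"] by simp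

text \<open>If gamma has bottom row (c, d), the bottom row (c T^n, d) of gamma diag(T^n, 1) has norm
  q ^ row_degree n (c, d).\<close>
definition row_degree :: "nat \<Rightarrow> 'a::zero poly \<times> 'a poly \<Rightarrow> nat" where
  "row_degree n cd = (case cd of (c, d) \<Rightarrow>
      if c = 0 then degree d else max (degree c + n) (degree d))"

lemma row_degree_mult:
  fixes g c d :: "'a::idom poly"
  assumes "g \<noteq> 0" "c \<noteq> 0 \<or> d \<noteq> 0"
  shows "row_degree n (g * c, g * d) = degree g + row_degree n (c, d)"
  using assms by (cases "d = 0") (auto simp: row_degree_def degree_mult_eq)

lemma psi_n_eq_row_degree:
  fixes c d :: "'a::{field,finite} poly"
  assumes "c \<noteq> 0 \<or> d \<noteq> 0"
  shows "psi_n n (c, d) = real CARD('a) ^ n / real CARD('a) ^ (2 * row_degree n (c, d))"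
proof -
  let ?Q = "real CARD('a)"
  have mono: "mono (\<lambda>k. ?Q ^ k)" by (rule monoI) (simp add: power_increasing)
  have "max (absA c * ?Q ^ n) (absA d) = ?Q ^ row_degree n (c, d)"
  proof (cases "c = 0 \<or> d = 0")
    case True
    then show ?thesis using assms by (auto simp: absA_def row_degree_def power_add)
  next
    case False
    then show ?thesis
      using max_of_mono[OF mono] by (simp add: absA_def row_degree_def power_add[symmetric])
  qed
  then show ?thesis by (simp add: psi_n_def power_mult power_mult_distrib[symmetric] mult.commute[of 2])
qed

lemma psi_n_nonneg: "0 \<le> psi_n n cd"
  by (cases cd) (simp add: psi_n_def)

lemma psi_n_powr_row_degree:
  fixes c d :: "'a::{field,finite} poly"
  assumes "c \<noteq> 0 \<or> d \<noteq> 0"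
  shows "psi_n n (c, d) powr s
    = ((real CARD('a) powr - s)\<^sup>2) ^ row_degree n (c, d) / (real CARD('a) powr - s) ^ n"
proof -
  let ?Q = "real CARD('a)"
  have power_powr: "(?Q ^ k) powr s = (?Q powr s) ^ k" for k
    by (simp add: powr_realpow[symmetric] powr_powr powr_power mult.commute)
  show ?thesis
    unfolding psi_n_eq_row_degree[OF assms] powr_divide power_powr
    by (simp add: powr_minus power_inverse divide_inverse mult.commute power_mult)
qed

lemma psi_n_powr_mult_monic:
  fixes g c d :: "'a::{field,finite} poly"
  assumes "lead_coeff g = 1" "c \<noteq> 0 \<or> d \<noteq> 0"
  shows "psi_n n (g * c, g * d) powr s
    = ((real CARD('a) powr - s)\<^sup>2) ^ degree g * psi_n n (c, d) powr s"
proof -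
  have "g \<noteq> 0" using assms(1) by auto
  then have "g * c \<noteq> 0 \<or> g * d \<noteq> 0" using assms(2) by simp
  then show ?thesis
    using assms(2) \<open>g \<noteq> 0\<close> by (simp add: psi_n_powr_row_degree row_degree_mult power_add)
qed

text \<open>E(v_n, s) as a rational function of z = q^-s.\<close>
definition eis_rat :: "'a::field \<Rightarrow> nat \<Rightarrow> 'a \<Rightarrow> 'a" where
  "eis_rat q n z = 1 / z ^ n + q ^ Suc n * z ^ n * (1 - z\<^sup>2) / (1 - q\<^sup>2 * z\<^sup>2)"

lemma powr_neg_square_bounds:
  fixes Q s :: real
  assumes "1 < Q" "1 < s"
  shows "Q * (Q * (Q powr - s)\<^sup>2) < 1" "Q * (Q powr - s)\<^sup>2 < 1"
proof -
  have "Q < Q powr s" using powr_less_cancel_iff[of Q 1 s] assms by simp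
  then have Qa: "Q * Q powr - s < 1" using assms by (simp add: powr_minus_divide field_simps)
  have "Q * (Q * (Q powr - s)\<^sup>2) = (Q * Q powr - s) * (Q * Q powr - s)"
    by (simp add: power2_eq_square)
  also have "\<dots> < 1 * 1" using Qa assms by (intro mult_strict_mono) simp_all
  finally show "Q * (Q * (Q powr - s)\<^sup>2) < 1" by simp
  moreover have "Q * (Q powr - s)\<^sup>2 \<le> Q * (Q * (Q powr - s)\<^sup>2)"
    using assms by (simp add: mult_le_cancel_right1 not_less)
  ultimately show "Q * (Q powr - s)\<^sup>2 < 1" by simp
qed

lemma has_sum_psi_n_powr_zero_column:
  fixes s :: real
  defines "Q \<equiv> real CARD('a::{field,finite})"
  defines "a \<equiv> Q powr - s"
  assumes "1 < s"
  shows "((\<lambda>d. psi_n n (0, d) powr s) has_sum 1 / a ^ n / (1 - Q * a\<^sup>2))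
           {d :: 'a poly. lead_coeff d = 1}"
proof -
  have "1 < Q" using card_ge_2_field[where 'a='a] by (simp add: Q_def)
  then have "Q * a\<^sup>2 < 1" using powr_neg_square_bounds[OF _ \<open>1 < s\<close>] by (simp add: a_def)
  then have sum: "((\<lambda>d :: 'a poly. (a\<^sup>2) ^ degree d / a ^ n) has_sum 1 / a ^ n / (1 - Q * a\<^sup>2))
      {d. lead_coeff d = 1}"
    using has_sum_divide_const[OF has_sum_monic_degree_power[of "a\<^sup>2", where 'a='a], of "a ^ n"]
    by (simp add: Q_def mult.commute)
  have psi: "psi_n n (0, d) powr s = (a\<^sup>2) ^ degree d / a ^ n"
    if "lead_coeff d = 1" for d :: "'a poly"
    using that psi_n_powr_row_degree[of 0 d n s]
    by (cases "d = 0") (simp_all add: row_degree_def a_def Q_def)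
  show ?thesis using sum by (rule has_sum_cong[THEN iffD1, rotated]) (simp add: psi)
qed

lemma has_sum_psi_n_powr_monic_row:
  fixes s :: real and c :: "'a::{field,finite} poly"
  defines "Q \<equiv> real CARD('a)"
  defines "a \<equiv> Q powr - s"
  assumes "1 < s" "lead_coeff c = 1"
  shows "((\<lambda>d. psi_n n (c, d) powr s) has_sum
           (Q * a\<^sup>2) ^ degree c * (Q ^ Suc n * a ^ n * (1 - a\<^sup>2) / (1 - Q * a\<^sup>2))) UNIV"
proof -
  define m where "m = degree c + n"
  have "1 < Q" using card_ge_2_field[where 'a='a] by (simp add: Q_def)
  then have "Q * a\<^sup>2 < 1" using powr_neg_square_bounds[OF _ \<open>1 < s\<close>] by (simp add: a_def)
  then have "((\<lambda>d :: 'a poly. (a\<^sup>2) ^ max m (degree d) / a ^ n)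
      has_sum Q ^ Suc m * (a\<^sup>2) ^ m * (1 - a\<^sup>2) / (1 - Q * a\<^sup>2) / a ^ n) UNIV"
    using has_sum_divide_const[OF has_sum_max_degree_power[of "a\<^sup>2" m]] by (simp add: Q_def)
  moreover have "Q ^ Suc m * (a\<^sup>2) ^ m * (1 - a\<^sup>2) / (1 - Q * a\<^sup>2) / a ^ n
      = (Q * a\<^sup>2) ^ degree c * (Q ^ Suc n * a ^ n * (1 - a\<^sup>2) / (1 - Q * a\<^sup>2))"
    by (simp add: m_def a_def power_add power_mult_distrib power2_eq_square)
  moreover have "psi_n n (c, d) powr s = (a\<^sup>2) ^ max m (degree d) / a ^ n" for d
    using psi_n_powr_row_degree[of c d n s] assms(4)
    by (cases "c = 0") (simp_all add: row_degree_def m_def a_def Q_def)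
  ultimately show ?thesis by simp
qed

lemma has_sum_psi_n_powr_normalized_pairs:
  fixes s :: real
  defines "Q \<equiv> real CARD('a::{field,finite})"
  defines "a \<equiv> Q powr - s"
  assumes "1 < s"
  shows "((\<lambda>cd. psi_n n cd powr s) has_sum eis_rat Q n a / (1 - Q * a\<^sup>2))
           (normalized_pairs :: ('a poly \<times> 'a poly) set)"
proof -
  define Monic where "Monic = {g :: 'a poly. lead_coeff g = 1}"
  define K where "K = Q ^ Suc n * a ^ n * (1 - a\<^sup>2) / (1 - Q * a\<^sup>2)"
  have "1 < Q" using card_ge_2_field[where 'a='a] by (simp add: Q_def)
  then have bounds: "Q * a\<^sup>2 < 1" "Q * (Q * a\<^sup>2) < 1"
    using powr_neg_square_bounds[OF _ \<open>1 < s\<close>] by (simp_all add: a_def)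
  have "((\<lambda>c. (Q * a\<^sup>2) ^ degree c * K) has_sum K / (1 - Q * (Q * a\<^sup>2))) Monic"
    using has_sum_cmult_left[OF has_sum_monic_degree_power[of "Q * a\<^sup>2"], of K] bounds
    by (simp add: Monic_def Q_def)
  then have rows: "((\<lambda>cd. psi_n n cd powr s) has_sum K / (1 - Q * (Q * a\<^sup>2))) (Monic \<times> UNIV)"
    using has_sum_psi_n_powr_monic_row[OF \<open>1 < s\<close>]
    by (intro nonneg_has_sum_SigmaI) (simp_all add: Monic_def K_def a_def Q_def)
  have column: "((\<lambda>cd. psi_n n cd powr s) has_sum 1 / a ^ n / (1 - Q * a\<^sup>2))
      ((\<lambda>d. (0, d)) ` Monic)"
    using has_sum_psi_n_powr_zero_column[OF \<open>1 < s\<close>, of n]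
    by (subst has_sum_reindex) (auto simp: inj_on_def o_def Monic_def a_def Q_def)
  have "(normalized_pairs :: ('a poly \<times> 'a poly) set) = (\<lambda>d. (0, d)) ` Monic \<union> Monic \<times> UNIV"
    by (simp add: normalized_pairs_eq Monic_def)
  moreover have "((\<lambda>cd. psi_n n cd powr s)
      has_sum 1 / a ^ n / (1 - Q * a\<^sup>2) + K / (1 - Q * (Q * a\<^sup>2))) ((\<lambda>d. (0, d)) ` Monic \<union> Monic \<times> UNIV)"
    by (rule has_sum_Un_disjoint[OF column rows]) (auto simp: Monic_def)
  moreover have "1 / a ^ n / (1 - Q * a\<^sup>2) + K / (1 - Q * (Q * a\<^sup>2)) = eis_rat Q n a / (1 - Q * a\<^sup>2)"
    using bounds by (simp add: eis_rat_def K_def add_divide_distrib power_mult_distrib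
        power2_eq_square[of Q] mult.assoc)
  ultimately show ?thesis by simp
qed

lemma has_sum_psi_n_powr_coset_reps:
  fixes s :: real
  defines "Q \<equiv> real CARD('a::{field,finite})"
  assumes "1 < s"
  shows "((\<lambda>cd. psi_n n cd powr s) has_sum eis_rat Q n (Q powr - s))
           (coset_reps :: ('a poly \<times> 'a poly) set)"
proof -
  let ?f = "\<lambda>cd :: 'a poly \<times> 'a poly. psi_n n cd powr s"
  define a where "a = Q powr - s"
  define Monic where "Monic = {g :: 'a poly. lead_coeff g = 1}"
  define T where "T = eis_rat Q n a / (1 - Q * a\<^sup>2)"
  have "1 < Q" using card_ge_2_field[where 'a='a] by (simp add: Q_def)
  then have bounds: "0 \<le> a\<^sup>2" "Q * a\<^sup>2 < 1"
    using powr_neg_square_bounds[OF _ \<open>1 < s\<close>] by (simp_all add: a_def)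
  have pairs: "(?f has_sum T) normalized_pairs"
    unfolding T_def a_def Q_def using \<open>1 < s\<close> by (rule has_sum_psi_n_powr_normalized_pairs)
  obtain W where W: "(?f has_sum W) coset_reps"
    using summable_on_subset_banach[OF has_sum_imp_summable[OF pairs]]
      coset_reps_subset_normalized_pairs by (auto simp: summable_on_def)
  have factored: "((\<lambda>(g, c, d). ?f (g * c, g * d)) has_sum T) (Monic \<times> coset_reps)"
    using has_sum_reindex_bij_betw[OF bij_betw_monic_times_coset_reps, of ?f T] pairs
    by (simp add: Monic_def case_prod_unfold)
  have scale: "?f (g * c, g * d) = (a\<^sup>2) ^ degree g * ?f (c, d)"
    if "g \<in> Monic" "(c, d) \<in> coset_reps" for g c d
  proof -
    have "c \<noteq> 0 \<or> d \<noteq> 0"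
      using that(2) coset_reps_subset_normalized_pairs by (intro normalized_pairs_nonzero) auto
    then show ?thesis
      using psi_n_powr_mult_monic[of g c d n s] that(1) by (simp add: Monic_def a_def Q_def)
  qed
  have "((\<lambda>(g, cd). (a\<^sup>2) ^ degree g * ?f cd) has_sum T) (Monic \<times> coset_reps)"
    using factored by (rule has_sum_cong[THEN iffD1, rotated]) (auto simp: scale)
  then have "((\<lambda>g. (a\<^sup>2) ^ degree g * W) has_sum T) Monic"
    by (rule has_sum_Sigma') (simp add: W has_sum_cmult_right)
  moreover have "((\<lambda>g. (a\<^sup>2) ^ degree g * W) has_sum W / (1 - Q * a\<^sup>2)) Monic"
    using has_sum_cmult_left[OF has_sum_monic_degree_power[of "a\<^sup>2"], of W] bounds
    by (simp add: Monic_def Q_def)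
  ultimately have "T = W / (1 - Q * a\<^sup>2)" by (rule has_sum_unique)
  then have "W = eis_rat Q n a" using bounds by (simp add: T_def)
  then show ?thesis using W by (simp add: a_def)
qed

lemma eis_rat_of_real: "of_real (eis_rat q n z) = (eis_rat (of_real q) n (of_real z) :: 'a::real_field)"
  by (simp add: eis_rat_def)

lemma eisenstein_eq_eis_rat_real:
  fixes E :: "complex \<Rightarrow> complex" and t :: real
  defines "Q \<equiv> real CARD('a::{field,finite})"
  assumes E_series: "\<And>s. 1 < Re s \<Longrightarrow>
      ((\<lambda>cd. complex_of_real (psi_n n cd) powr s) has_sum E s) (coset_reps :: ('a poly \<times> 'a poly) set)"
    and "1 < t"
  shows "E (of_real t) = eis_rat (of_real Q) n (of_real Q powr - of_real t)"
proof -
  have "((\<lambda>cd. complex_of_real (psi_n n cd) powr of_real t) has_sum of_real (eis_rat Q n (Q powr - t)))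
      (coset_reps :: ('a poly \<times> 'a poly) set)"
    using has_sum_of_real[OF has_sum_psi_n_powr_coset_reps[OF \<open>1 < t\<close>, of n]]
    by (simp add: powr_of_real psi_n_nonneg Q_def)
  moreover have "of_real Q powr - of_real t = complex_of_real (Q powr - t)"
    using powr_of_real[of Q "- t"] by (simp add: Q_def)
  ultimately show ?thesis
    using has_sum_unique E_series[of "of_real t"] \<open>1 < t\<close> by (simp add: eis_rat_of_real)
qed

section \<open>Analytic continuation\<close>

lemma eis_poles_Re_Im:
  "s \<in> eis_poles Q \<Longrightarrow> Re s = 1 \<and> (\<exists>k::int. Im s = of_int k * pi / ln Q)"
  by (auto simp: eis_poles_def Re_divide_of_real Im_divide_of_real)

lemma eis_rat_denominator_nonzero:
  fixes Q :: real
  assumes "1 < Q" "s \<notin> eis_poles Q"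
  shows "1 - (of_real Q)\<^sup>2 * (of_real Q powr - s)\<^sup>2 \<noteq> 0"
proof
  let ?L = "ln Q"
  assume "1 - (of_real Q)\<^sup>2 * (of_real Q powr - s)\<^sup>2 = 0"
  moreover have "(of_real Q)\<^sup>2 * (of_real Q powr - s)\<^sup>2 = exp ((2 - 2 * s) * of_real ?L)"
  proof -
    have "complex_of_real Q = exp (of_real ?L)" using assms(1) by (simp add: exp_of_real)
    then show ?thesis
      using assms(1) by (simp add: powr_def Ln_of_real power2_eq_square exp_add[symmetric]
          algebra_simps)
  qed
  ultimately obtain k :: int where "Re ((2 - 2 * s) * of_real ?L) = 0"
      and "Im ((2 - 2 * s) * of_real ?L) = of_int (2 * k) * pi"
    by (auto simp: exp_eq_1)
  moreover have "0 < ?L" using assms(1) by simp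
  ultimately have "Re s = 1" "Im s = of_int (- k) * pi / ?L" by (simp_all add: field_simps)
  then have "s = 1 + of_int (- k) * of_real pi * \<i> / of_real ?L"
    by (intro complex_eqI) (simp_all add: Re_divide_of_real Im_divide_of_real)
  then show False using assms(2) unfolding eis_poles_def by blast
qed

lemma eis_rat_powr_holomorphic:
  fixes Q :: real
  assumes "0 < Q"
  shows "(\<lambda>s. eis_rat (of_real Q) n (of_real Q powr - s))
           holomorphic_on {s. 1 - (of_real Q)\<^sup>2 * (of_real Q powr - s)\<^sup>2 \<noteq> 0}"
  unfolding eis_rat_def using assms by (intro holomorphic_intros) auto

lemma convex_Re_eq: "convex {z. Re z = c}"
proof -
  have "{z. Re z = c} = {z. c \<le> Re z} \<inter> {z. Re z \<le> c}" by auto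
  then show ?thesis by (simp add: convex_Int convex_halfspace_Re_ge convex_halfspace_Re_le)
qed

lemma convex_Im_eq: "convex {z. Im z = c}"
proof -
  have "{z. Im z = c} = {z. c \<le> Im z} \<inter> {z. Im z \<le> c}" by auto
  then show ?thesis by (simp add: convex_Int convex_halfspace_Im_ge convex_halfspace_Im_le)
qed

lemma connected_set_avoiding_eis_poles:
  fixes Q :: real and s :: complex
  assumes "1 < Q" "1/2 \<le> Re s" "Re s \<noteq> 1"
  obtains C where "connected C" "s \<in> C" "{z. 1 < Re z} \<subseteq> C"
    "C \<subseteq> {z. 1/2 \<le> Re z} - eis_poles Q"
proof -
  \<comment> \<open>The line through s, joined to the half-plane Re z > 1 by a horizontal ray at a height
    strictly between two consecutive pole heights.\<close>
  define \<tau> where "\<tau> = pi / (2 * ln Q)"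
  define C where "C = {z. Re z = Re s} \<union> ({z. Im z = \<tau>} \<inter> {z. Re s \<le> Re z}) \<union> {z. 1 < Re z}"
  have "connected C"
    unfolding C_def
  proof (intro connected_Un convex_connected convex_Int)
    show "{z. Re z = Re s} \<inter> ({z. Im z = \<tau>} \<inter> {z. Re s \<le> Re z}) \<noteq> {}"
      unfolding ex_in_conv[symmetric] by (auto intro!: exI[of _ "Complex (Re s) \<tau>"])
    show "({z. Re z = Re s} \<union> {z. Im z = \<tau>} \<inter> {z. Re s \<le> Re z}) \<inter> {z. 1 < Re z} \<noteq> {}"
      unfolding ex_in_conv[symmetric] by (auto intro!: exI[of _ "Complex (max 2 (Re s)) \<tau>"])
  qed (simp_all add: convex_Re_eq convex_Im_eq convex_halfspace_Re_gt convex_halfspace_Re_ge)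
  moreover have "C \<subseteq> {z. 1/2 \<le> Re z} - eis_poles Q"
  proof
    fix z assume z: "z \<in> C"
    have "z \<notin> eis_poles Q"
    proof
      assume "z \<in> eis_poles Q"
      then obtain k :: int where k: "Re z = 1" "Im z = of_int k * pi / ln Q"
        by (auto dest: eis_poles_Re_Im)
      then have "Im z = \<tau>" using z assms(3) by (auto simp: C_def)
      then have "of_int (2 * k) = (1 :: real)"
        using k \<open>1 < Q\<close> by (simp add: \<tau>_def field_simps)
      then show False by presburger
    qed
    then show "z \<in> {z. 1/2 \<le> Re z} - eis_poles Q" using z assms(2) by (auto simp: C_def)
  qed
  ultimately show thesis by (intro that) (auto simp: C_def)
qed

lemma islimpt_of_real_atLeastAtMost:
  fixes a b :: real
  assumes "a < b"
  shows "(of_real a :: complex) islimpt (of_real ` {a..b})"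
proof (rule connected_imp_perfect)
  show "connected (of_real ` {a..b} :: complex set)"
    by (intro connected_continuous_image continuous_intros) simp
  show "(of_real ` {a..b} :: complex set) \<noteq> {z}" for z
  proof
    assume eq: "(of_real ` {a..b} :: complex set) = {z}"
    have "of_real a \<in> {z}" "of_real b \<in> {z}"
      unfolding eq[symmetric] using assms by (auto intro: imageI)
    then have "of_real a = (of_real b :: complex)" by simp
    then show False using assms by simp
  qed
qed (use assms in auto)

lemma eq_eis_rat_by_continuation:
  fixes f :: "complex \<Rightarrow> complex" and Q :: real
  assumes "1 < Q"
    and real: "\<And>t. 1 < t \<Longrightarrow> f (of_real t) = eis_rat (of_real Q) n (of_real Q powr - of_real t)"
    and U: "open U" "{s. 1/2 \<le> Re s} - eis_poles Q \<subseteq> U" "f holomorphic_on U"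
    and s: "1/2 \<le> Re s" "Re s \<noteq> 1"
  shows "f s = eis_rat (of_real Q) n (of_real Q powr - s)"
proof -
  let ?g = "\<lambda>s. f s - eis_rat (of_real Q) n (of_real Q powr - s)"
  define V where "V = U \<inter> {s. 1 - (of_real Q)\<^sup>2 * (of_real Q powr - s)\<^sup>2 \<noteq> 0}"
  have "open V"
    unfolding V_def using U(1) \<open>1 < Q\<close> by (intro open_Int open_Collect_neq continuous_intros) auto
  obtain C where C: "connected C" "s \<in> C" "{z. 1 < Re z} \<subseteq> C"
    "C \<subseteq> {z. 1/2 \<le> Re z} - eis_poles Q"
    using connected_set_avoiding_eis_poles[OF \<open>1 < Q\<close> s] by blast
  have "C \<subseteq> V"
    using C(4) U(2) eis_rat_denominator_nonzero[OF \<open>1 < Q\<close>] by (auto simp: V_def)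
  define S where "S = connected_component_set V s"
  have "C \<subseteq> S"
    unfolding S_def using C(2,1) \<open>C \<subseteq> V\<close> by (rule connected_component_maximal)
  have "?g holomorphic_on S"
  proof (intro holomorphic_intros)
    have "S \<subseteq> V" unfolding S_def by (rule connected_component_subset)
    then show "f holomorphic_on S" "(\<lambda>s. eis_rat (of_real Q) n (of_real Q powr - s)) holomorphic_on S"
      using holomorphic_on_subset[OF U(3)] holomorphic_on_subset[OF eis_rat_powr_holomorphic]
        \<open>1 < Q\<close> by (auto simp: V_def)
  qed
  moreover have "open S" "connected S"
    unfolding S_def using \<open>open V\<close> by (simp_all add: open_connected_component)
  moreover have "of_real ` {2..3} \<subseteq> S" "of_real 2 \<in> S"
  proof -
    have "of_real ` {2..3} \<subseteq> {z. 1 < Re z}" "of_real 2 \<in> {z. 1 < Re z}" by auto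
    then show "of_real ` {2..3} \<subseteq> S" "of_real 2 \<in> S" using C(3) \<open>C \<subseteq> S\<close> by blast+
  qed
  moreover have "of_real 2 islimpt (of_real ` {2..3} :: complex set)"
    by (rule islimpt_of_real_atLeastAtMost) simp
  moreover have "\<And>z. z \<in> of_real ` {2..3} \<Longrightarrow> ?g z = 0"
    using real by auto
  moreover have "s \<in> S" using C(2) \<open>C \<subseteq> S\<close> by blast
  ultimately have "?g s = 0" by (rule analytic_continuation)
  then show ?thesis by simp
qed

section \<open>The critical line\<close>

lemma mu_q_eis_rat_series_identity:
  fixes p z :: "'a::field_char_0"
  assumes "p \<noteq> 0" "z \<noteq> 0" "z \<noteq> 1" "p * z \<noteq> 1" "p * z \<noteq> -1"
  defines "u \<equiv> 1 / (p * z)" and "C \<equiv> (1 - z\<^sup>2) / (1 - p\<^sup>2 * z\<^sup>2)"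
  shows "(p - 1) / (2 * p) * (1 + p * C)
    + ((p\<^sup>2 - 1) / (2 * p) * (u / (1 - u)) + (p\<^sup>2 - 1) / 2 * C * (z / (1 - z))) = 0"
proof -
  have "1 - p * z \<noteq> 0" "1 + p * z \<noteq> 0" "1 - z \<noteq> 0" "p * z - 1 \<noteq> 0"
    using assms(3-5) by (auto simp: add_eq_0_iff)
  have powers_of_u: "(p - 1) / (2 * p) + (p\<^sup>2 - 1) / (2 * p) * (u / (1 - u))
      = (p - 1) / 2 * ((1 + z) / (p * z - 1))"
  proof -
    have geometric: "u / (1 - u) = 1 / (p * z - 1)"
      using assms(1,2,4) by (simp add: u_def field_simps)
    show ?thesis
      unfolding geometric using \<open>p * z - 1 \<noteq> 0\<close> assms(1) by (simp add: field_simps power2_eq_square)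
  qed
  have powers_of_z: "(p - 1) / (2 * p) * (p * C) + (p\<^sup>2 - 1) / 2 * C * (z / (1 - z))
      = (p - 1) / 2 * ((1 + z) / (1 - p * z))"
  proof -
    have "(p - 1) / (2 * p) * (p * C) + (p\<^sup>2 - 1) / 2 * C * (z / (1 - z))
        = (p - 1) / 2 * (C * (1 + p * z) / (1 - z))"
      using assms(1) \<open>1 - z \<noteq> 0\<close> by (simp add: field_simps power2_eq_square)
    also have "C * (1 + p * z) / (1 - z) = (1 + z) / (1 - p * z)"
    proof -
      have "C = (1 - z) * (1 + z) / ((1 - p * z) * (1 + p * z))"
        by (simp add: C_def power2_eq_square algebra_simps)
      then show ?thesis using \<open>1 - p * z \<noteq> 0\<close> \<open>1 + p * z \<noteq> 0\<close> \<open>1 - z \<noteq> 0\<close> by simp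
    qed
    finally show ?thesis .
  qed
  have "(p - 1) / (2 * p) * (1 + p * C)
      + ((p\<^sup>2 - 1) / (2 * p) * (u / (1 - u)) + (p\<^sup>2 - 1) / 2 * C * (z / (1 - z)))
      = ((p - 1) / (2 * p) + (p\<^sup>2 - 1) / (2 * p) * (u / (1 - u)))
      + ((p - 1) / (2 * p) * (p * C) + (p\<^sup>2 - 1) / 2 * C * (z / (1 - z)))"
    by (simp only: distrib_left mult_1_right add_ac)
  also have "\<dots> = (p - 1) / 2 * ((1 + z) / (p * z - 1)) + (p - 1) / 2 * ((1 + z) / (1 - p * z))"
    unfolding powers_of_u powers_of_z ..
  also have "\<dots> = 0"
    by (subst minus_diff_eq[symmetric, of 1 "p * z"]) (simp del: minus_diff_eq)
  finally show ?thesis .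
qed

lemma has_sum_mu_q_eis_rat_zero:
  fixes q :: real and z :: complex
  assumes "1 < q" "norm z < 1" "1 < q * norm z"
  shows "((\<lambda>n. of_real (mu_q q n) * eis_rat (of_real q) n z) has_sum 0) UNIV"
proof -
  define p where "p = complex_of_real q"
  define C where "C = (1 - z\<^sup>2) / (1 - p\<^sup>2 * z\<^sup>2)"
  let ?u = "1 / (p * z)" and ?A = "(p\<^sup>2 - 1) / (2 * p)" and ?B = "(p\<^sup>2 - 1) / 2 * C"
  have "p \<noteq> 0" "z \<noteq> 0" "z \<noteq> 1" using assms by (auto simp: p_def)
  have "norm (p * z) = q * norm z" using assms by (simp add: p_def norm_mult)
  then have "norm ?u < 1" "p * z \<noteq> 1" "p * z \<noteq> -1"
    using assms by (auto simp: norm_divide)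
  have summand: "of_real (mu_q q n) * eis_rat p n z = ?A * ?u ^ n + ?B * z ^ n" if "n \<in> {1..}" for n
  proof -
    have "of_real (mu_q q n) * eis_rat p n z
        = (p\<^sup>2 - 1) / (2 * p ^ Suc n) * (1 / z ^ n + p ^ Suc n * z ^ n * C)"
      using that by (simp add: mu_q_def eis_rat_def p_def C_def)
    also have "\<dots> = ?A * ?u ^ n + ?B * z ^ n"
      using \<open>p \<noteq> 0\<close> \<open>z \<noteq> 0\<close> by (simp add: field_simps power_mult_distrib)
    finally show ?thesis .
  qed
  have "((\<lambda>n. ?A * ?u ^ n + ?B * z ^ n) has_sum ?A * (?u / (1 - ?u)) + ?B * (z / (1 - z))) {1..}"
    using \<open>norm ?u < 1\<close> assms(2)
    by (intro has_sum_add has_sum_cmult_right has_sum_geometric_from_1)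
  then have "((\<lambda>n. of_real (mu_q q n) * eis_rat p n z)
      has_sum ?A * (?u / (1 - ?u)) + ?B * (z / (1 - z))) {1..}"
    by (rule has_sum_cong[THEN iffD1, rotated]) (simp add: summand)
  moreover have "((\<lambda>n. of_real (mu_q q n) * eis_rat p n z) has_sum (p - 1) / (2 * p) * (1 + p * C)) {0}"
    by (rule has_sum_finiteI) (simp_all add: mu_q_def eis_rat_def C_def p_def)
  ultimately have "((\<lambda>n. of_real (mu_q q n) * eis_rat p n z)
      has_sum (p - 1) / (2 * p) * (1 + p * C) + (?A * (?u / (1 - ?u)) + ?B * (z / (1 - z))))
      ({0} \<union> {1..})"
    by (intro has_sum_Un_disjoint) auto
  moreover have "{0} \<union> {1..} = (UNIV :: nat set)" by auto
  ultimately show ?thesis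
    using mu_q_eis_rat_series_identity[of p z] \<open>p \<noteq> 0\<close> \<open>z \<noteq> 0\<close> \<open>z \<noteq> 1\<close>
      \<open>p * z \<noteq> 1\<close> \<open>p * z \<noteq> -1\<close>
    by (simp add: p_def C_def mult.assoc)
qed

lemma norm_powr_critical_line:
  fixes Q :: real and s :: complex
  assumes "1 < Q" "Re s = 1/2"
  shows "norm (of_real Q powr - s) < 1" "1 < Q * norm (of_real Q powr - s)"
proof -
  have "norm (of_real Q powr - s) = Q powr - (1/2)"
    using assms(1) by (simp add: norm_powr_real_powr assms(2))
  moreover have "Q powr - (1/2) < 1" "1 < Q powr (1 + - (1/2))"
    using powr_less_cancel_iff[of Q "- (1/2)" 0] powr_less_cancel_iff[of Q 0 "1 + - (1/2)"] assms(1)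
    by simp_all
  ultimately show "norm (of_real Q powr - s) < 1" "1 < Q * norm (of_real Q powr - s)"
    using assms(1) by (simp_all add: powr_mult_base)
qed

theorem lemma5p1:
  fixes E :: "nat \<Rightarrow> complex \<Rightarrow> complex" and \<theta> :: real
  assumes q_odd: "odd CARD('a::{field,finite})"
    and E_series: "\<And>n s. Re s > 1 \<Longrightarrow>
        ((\<lambda>cd. complex_of_real (psi_n n cd) powr s) has_sum E n s)
          (coset_reps :: ('a poly \<times> 'a poly) set)"
    and E_holo: "\<And>n. \<exists>U. open U \<and> {s. Re s \<ge> 1/2} - eis_poles (real CARD('a)) \<subseteq> U
                        \<and> E n holomorphic_on U"
  shows "((\<lambda>n. complex_of_real (mu_q (real CARD('a)) n)
              * E n (1/2 + \<i> * of_real (\<theta> / ln (real CARD('a))))) has_sum 0) UNIV"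
proof -
  define Q where "Q = real CARD('a)"
  define s where "s = 1/2 + \<i> * of_real (\<theta> / ln Q)"
  define z where "z = of_real Q powr - s"
  have "1 < Q" using card_ge_2_field[where 'a='a] by (simp add: Q_def)
  have E_s: "E n s = eis_rat (of_real Q) n z" for n
  proof -
    obtain U where U: "open U" "{s. 1/2 \<le> Re s} - eis_poles Q \<subseteq> U" "E n holomorphic_on U"
      using E_holo[of n] unfolding Q_def by blast
    have real: "E n (of_real t) = eis_rat (of_real Q) n (of_real Q powr - of_real t)" if "1 < t" for t
      unfolding Q_def using E_series that by (rule eisenstein_eq_eis_rat_real)
    show ?thesis
      unfolding z_def by (rule eq_eis_rat_by_continuation[OF \<open>1 < Q\<close> real U]) (simp_all add: s_def)
  qed
  have "Re s = 1/2" by (simp add: s_def)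
  then have "norm z < 1" "1 < Q * norm z"
    unfolding z_def using norm_powr_critical_line[OF \<open>1 < Q\<close>] by blast+
  then have "((\<lambda>n. of_real (mu_q Q n) * eis_rat (of_real Q) n z) has_sum 0) UNIV"
    using \<open>1 < Q\<close> by (intro has_sum_mu_q_eis_rat_zero)
  then show ?thesis unfolding Q_def[symmetric] s_def[symmetric] E_s .
qed

end
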